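(* Let $S$ be a semigroup with involution, $I\in\mathbb{H}$ an imaginary unit, and $\phi:S\to\mathbb{C}_I$. Then $\phi$ is complex positive definite (i.e. $\sum_{i,j=1}^n\overline{c_i}c_j\phi(s_i^*\circ s_j)\ge0$ for all $n$, $s_i\in S$, $c_i\in\mathbb{C}_I$) if and only if $\phi$ is quaternionic positive definite.
   Context: $\mathbb{H}$ is the real quaternion algebra. An imaginary unit is a quaternion $I$ with $\overline I=-I$ and $|I|=1$ (so $I^2=-1$); $\mathbb{C}_I=\mathbb{R}\oplus I\mathbb{R}$ is the corresponding complex slice. A semigroup with involution is a set $S$ with an associative binary operation $\circ$ with neutral element $e$ and a bijection $s\mapsto s^*$ with $(s^* )^*=s$, $(s\circ t)^*=t^*\circ s^*$. $\phi:S\to\mathbb{H}$ is quaternionic positive definite if $\sum_{i,j=1}^k \overline{q_i}\phi(s_i^*\circ s_j)q_j$ is a nonnegative real number for all $k$, $s_i\in S$, $q_i\in\mathbb{H}$. *)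

theory Defs
  imports Complex_Main
begin

datatype quat = Quat (QRe: real) (Im1: real) (Im2: real) (Im3: real)

instantiation quat :: ring_1
begin
definition "0 = Quat 0 0 0 0"
definition "1 = Quat 1 0 0 0"
definition "p + q = Quat (QRe p + QRe q) (Im1 p + Im1 q) (Im2 p + Im2 q) (Im3 p + Im3 q)"
definition "p - q = Quat (QRe p - QRe q) (Im1 p - Im1 q) (Im2 p - Im2 q) (Im3 p - Im3 q)"
definition "- q = Quat (- QRe q) (- Im1 q) (- Im2 q) (- Im3 q)"
definition "p * q = Quat
   (QRe p * QRe q - Im1 p * Im1 q - Im2 p * Im2 q - Im3 p * Im3 q)
   (QRe p * Im1 q + Im1 p * QRe q + Im2 p * Im3 q - Im3 p * Im2 q)
   (QRe p * Im2 q - Im1 p * Im3 q + Im2 p * QRe q + Im3 p * Im1 q)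
   (QRe p * Im3 q + Im1 p * Im2 q - Im2 p * Im1 q + Im3 p * QRe q)"
instance
  by standard (auto simp: zero_quat_def one_quat_def plus_quat_def minus_quat_def
      uminus_quat_def times_quat_def algebra_simps intro: quat.expand)
end

definition qreal :: "real \<Rightarrow> quat" where "qreal r = Quat r 0 0 0"
definition qcnj :: "quat \<Rightarrow> quat" where "qcnj q = Quat (QRe q) (- Im1 q) (- Im2 q) (- Im3 q)"
definition qnorm :: "quat \<Rightarrow> real" where
  "qnorm q = sqrt ((QRe q)\<^sup>2 + (Im1 q)\<^sup>2 + (Im2 q)\<^sup>2 + (Im3 q)\<^sup>2)"

definition imag_unit :: "quat \<Rightarrow> bool" where
  "imag_unit I \<longleftrightarrow> qcnj I = - I \<and> qnorm I = 1"

definition cslice :: "quat \<Rightarrow> quat set" where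
  "cslice I = {qreal a + qreal b * I | a b. True}"

text \<open>Semigroup with involution (S is the whole type 'a).\<close>
definition semigroup_involution :: "('a \<Rightarrow> 'a \<Rightarrow> 'a) \<Rightarrow> 'a \<Rightarrow> ('a \<Rightarrow> 'a) \<Rightarrow> bool" where
  "semigroup_involution op e star \<longleftrightarrow>
     (\<forall>x y z. op (op x y) z = op x (op y z)) \<and>
     (\<forall>x. op e x = x \<and> op x e = x) \<and>
     bij star \<and> (\<forall>x. star (star x) = x) \<and>
     (\<forall>x y. star (op x y) = op (star y) (star x))"

definition quat_pos_def :: "('a \<Rightarrow> 'a \<Rightarrow> 'a) \<Rightarrow> ('a \<Rightarrow> 'a) \<Rightarrow> ('a \<Rightarrow> quat) \<Rightarrow> bool" where
  "quat_pos_def op star \<phi> \<longleftrightarrow>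
     (\<forall>(k::nat) (s::nat \<Rightarrow> 'a) (q::nat \<Rightarrow> quat). \<exists>r\<ge>0.
        (\<Sum>i<k. \<Sum>j<k. qcnj (q i) * \<phi> (op (star (s i)) (s j)) * q j) = qreal r)"

definition cplx_pos_def :: "quat \<Rightarrow> ('a \<Rightarrow> 'a \<Rightarrow> 'a) \<Rightarrow> ('a \<Rightarrow> 'a) \<Rightarrow> ('a \<Rightarrow> quat) \<Rightarrow> bool" where
  "cplx_pos_def I op star \<phi> \<longleftrightarrow>
     (\<forall>(k::nat) (s::nat \<Rightarrow> 'a) (c::nat \<Rightarrow> quat). (\<forall>i. c i \<in> cslice I) \<longrightarrow> (\<exists>r\<ge>0.
        (\<Sum>i<k. \<Sum>j<k. qcnj (c i) * c j * \<phi> (op (star (s i)) (s j))) = qreal r))"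

end

theory Submission
  imports Defs
begin

text \<open>Identify \<open>\<complex>\<^sub>I\<close> with \<open>\<complex>\<close> through the ring embedding \<open>a + b\<i> \<mapsto> a + bI\<close>. Since \<open>\<complex>\<^sub>I\<close> is
  commutative, for \<open>\<complex>\<^sub>I\<close>-valued coefficients the quaternionic form equals the complex one, which
  gives one direction. Conversely, pick a unit \<open>J\<close> anticommuting with \<open>I\<close>: every quaternion is
  \<open>a + bJ\<close> with \<open>a, b \<in> \<complex>\<^sub>I\<close>, and \<open>J z = cnj z J\<close> for \<open>z \<in> \<complex>\<^sub>I\<close>. In terms of the complex
  sesquilinear form \<open>B\<close> of the kernel, the quaternionic form at \<open>a + bJ\<close> is then
  \<open>B(a,a) + cnj (B(b,b)) + (B(a,b) - cnj (B(b,a))) J\<close>, and the \<open>J\<close>-part vanishes because \<open>B\<close> is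
  Hermitian, by polarization, as soon as \<open>B(c,c)\<close> is always real.\<close>

lemma quat_eq_iff: "p = q \<longleftrightarrow> QRe p = QRe q \<and> Im1 p = Im1 q \<and> Im2 p = Im2 q \<and> Im3 p = Im3 q"
  by (cases p; cases q) auto

lemma quat_components [simp]:
  "QRe (p + q) = QRe p + QRe q" "Im1 (p + q) = Im1 p + Im1 q"
  "Im2 (p + q) = Im2 p + Im2 q" "Im3 (p + q) = Im3 p + Im3 q"
  "QRe (p - q) = QRe p - QRe q" "Im1 (p - q) = Im1 p - Im1 q"
  "Im2 (p - q) = Im2 p - Im2 q" "Im3 (p - q) = Im3 p - Im3 q"
  "QRe (- q) = - QRe q" "Im1 (- q) = - Im1 q" "Im2 (- q) = - Im2 q" "Im3 (- q) = - Im3 q"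
  "QRe 0 = 0" "Im1 0 = 0" "Im2 0 = 0" "Im3 0 = 0"
  "QRe 1 = 1" "Im1 1 = 0" "Im2 1 = 0" "Im3 1 = 0"
  "QRe (qreal r) = r" "Im1 (qreal r) = 0" "Im2 (qreal r) = 0" "Im3 (qreal r) = 0"
  "QRe (qcnj q) = QRe q" "Im1 (qcnj q) = - Im1 q" "Im2 (qcnj q) = - Im2 q" "Im3 (qcnj q) = - Im3 q"
  "QRe (p * q) = QRe p * QRe q - Im1 p * Im1 q - Im2 p * Im2 q - Im3 p * Im3 q"
  "Im1 (p * q) = QRe p * Im1 q + Im1 p * QRe q + Im2 p * Im3 q - Im3 p * Im2 q"
  "Im2 (p * q) = QRe p * Im2 q - Im1 p * Im3 q + Im2 p * QRe q + Im3 p * Im1 q"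
  "Im3 (p * q) = QRe p * Im3 q + Im1 p * Im2 q - Im2 p * Im1 q + Im3 p * QRe q"
  by (simp_all add: plus_quat_def minus_quat_def uminus_quat_def zero_quat_def one_quat_def
      times_quat_def qreal_def qcnj_def)

lemma qcnj_add: "qcnj (p + q) = qcnj p + qcnj q"
  by (simp add: quat_eq_iff)

lemma qcnj_mult: "qcnj (p * q) = qcnj q * qcnj p"
  by (simp add: quat_eq_iff algebra_simps)

lemma qreal_mult_commute: "qreal r * q = q * qreal r"
  by (simp add: quat_eq_iff)

lemma imag_unit_components:
  assumes "imag_unit I"
  shows "QRe I = 0" "(Im1 I)\<^sup>2 + (Im2 I)\<^sup>2 + (Im3 I)\<^sup>2 = 1"
proof -
  from assms have "qcnj I = - I" and "qnorm I = 1"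
    by (auto simp: imag_unit_def)
  from arg_cong[OF \<open>qcnj I = - I\<close>, of QRe] show "QRe I = 0"
    by simp
  with \<open>qnorm I = 1\<close> show "(Im1 I)\<^sup>2 + (Im2 I)\<^sup>2 + (Im3 I)\<^sup>2 = 1"
    by (simp add: qnorm_def)
qed

definition slice_emb :: "quat \<Rightarrow> complex \<Rightarrow> quat" where
  "slice_emb I z = qreal (Re z) + qreal (Im z) * I"

definition sesq_form :: "('i \<Rightarrow> 'i \<Rightarrow> complex) \<Rightarrow> 'i set \<Rightarrow> ('i \<Rightarrow> complex) \<Rightarrow> ('i \<Rightarrow> complex) \<Rightarrow> complex"
  where "sesq_form F A x y = (\<Sum>i\<in>A. \<Sum>j\<in>A. cnj (x i) * y j * F i j)"

lemma sesq_form_hermitian: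
  assumes real: "\<And>c. sesq_form F A c c \<in> \<real>"
  shows "sesq_form F A x y = cnj (sesq_form F A y x)"
proof -
  let ?B = "sesq_form F A"
  have add_left: "?B (\<lambda>i. u i + v i) w = ?B u w + ?B v w" for u v w
    by (simp add: sesq_form_def algebra_simps sum.distrib)
  have add_right: "?B w (\<lambda>i. u i + v i) = ?B w u + ?B w v" for u v w
    by (simp add: sesq_form_def algebra_simps sum.distrib)
  have scale_left: "?B (\<lambda>i. c * u i) w = cnj c * ?B u w" for u w c
    by (simp add: sesq_form_def sum_distrib_left algebra_simps)
  have scale_right: "?B w (\<lambda>i. c * u i) = c * ?B w u" for u w c
    by (simp add: sesq_form_def sum_distrib_left algebra_simps)
  have Im_diag: "Im (?B u u) = 0" for u
    using real[of u] by (simp add: complex_is_Real_iff)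
  have "?B (\<lambda>i. x i + y i) (\<lambda>i. x i + y i) = ?B x x + ?B x y + ?B y x + ?B y y"
    by (simp add: add_left add_right)
  then have "Im (?B x y) + Im (?B y x) = 0"
    using Im_diag[of x] Im_diag[of y] Im_diag[of "\<lambda>i. x i + y i"] by simp
  moreover have "?B (\<lambda>i. x i + \<i> * y i) (\<lambda>i. x i + \<i> * y i) = ?B x x + \<i> * ?B x y - \<i> * ?B y x + ?B y y"
    by (simp add: add_left add_right scale_left scale_right algebra_simps)
  then have "Re (?B x y) - Re (?B y x) = 0"
    using Im_diag[of x] Im_diag[of y] Im_diag[of "\<lambda>i. x i + \<i> * y i"] by simp
  ultimately show ?thesis
    by (simp add: complex_eq_iff)
qed

locale quat_slice =
  fixes I :: quat
  assumes imag_unit: "imag_unit I"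
begin

abbreviation emb :: "complex \<Rightarrow> quat" where "emb \<equiv> slice_emb I"

lemma Re_I: "QRe I = 0"
  and norm_I: "(Im1 I)\<^sup>2 + (Im2 I)\<^sup>2 + (Im3 I)\<^sup>2 = 1"
  using imag_unit_components[OF imag_unit] by auto

lemma emb_components [simp]:
  "QRe (emb z) = Re z" "Im1 (emb z) = Im z * Im1 I"
  "Im2 (emb z) = Im z * Im2 I" "Im3 (emb z) = Im z * Im3 I"
  by (simp_all add: slice_emb_def Re_I)

lemma cslice_eq_range: "cslice I = range emb"
proof (intro set_eqI iffI)
  fix x assume "x \<in> cslice I"
  then obtain a b where "x = qreal a + qreal b * I"
    by (auto simp: cslice_def)
  then have "x = emb (Complex a b)"
    by (simp add: slice_emb_def)
  then show "x \<in> range emb"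
    by blast
qed (auto simp: cslice_def slice_emb_def)

lemma I_mult_I: "I * I = -1"
  using norm_I by (simp add: quat_eq_iff Re_I power2_eq_square algebra_simps)

lemma I_mult_I_left: "I * (I * x) = - x"
  by (simp add: I_mult_I flip: mult.assoc)

lemma emb_0: "emb 0 = 0"
  by (simp add: quat_eq_iff)

lemma emb_add: "emb (z + w) = emb z + emb w"
  by (simp add: quat_eq_iff algebra_simps)

lemma emb_diff: "emb (z - w) = emb z - emb w"
  by (simp add: quat_eq_iff algebra_simps)

lemma emb_mult: "emb (z * w) = emb z * emb w"
proof -
  have "Im z * Im w = Im z * Im w * ((Im1 I)\<^sup>2 + (Im2 I)\<^sup>2 + (Im3 I)\<^sup>2)"
    using norm_I by simp
  then show ?thesis
    by (simp add: quat_eq_iff algebra_simps power2_eq_square)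
qed

lemma emb_cnj: "emb (cnj z) = qcnj (emb z)"
  by (simp add: quat_eq_iff)

lemma emb_of_real: "emb (of_real r) = qreal r"
  by (simp add: quat_eq_iff)

lemma emb_sum: "emb (sum f A) = (\<Sum>x\<in>A. emb (f x))"
  by (induction A rule: infinite_finite_induct) (auto simp: emb_add quat_eq_iff)

lemma inj_emb: "inj emb"
proof (rule injI)
  fix z w assume "emb z = emb w"
  then have "Re z = Re w" and "Im z * Im1 I = Im w * Im1 I"
    and "Im z * Im2 I = Im w * Im2 I" and "Im z * Im3 I = Im w * Im3 I"
    by (simp_all add: quat_eq_iff)
  moreover have "Im u = (Im u * Im1 I) * Im1 I + (Im u * Im2 I) * Im2 I + (Im u * Im3 I) * Im3 I"
    for u
  proof -
    have "Im u = Im u * ((Im1 I)\<^sup>2 + (Im2 I)\<^sup>2 + (Im3 I)\<^sup>2)"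
      using norm_I by simp
    then show ?thesis
      by (simp add: power2_eq_square algebra_simps)
  qed
  ultimately show "z = w"
    by (metis complex_eqI)
qed

lemma commute_I_imp_in_range_emb:
  assumes "x * I = I * x"
  shows "x \<in> range emb"
proof -
  let ?t = "Im1 x * Im1 I + Im2 x * Im2 I + Im3 x * Im3 I"
  have "Im2 x * Im3 I = Im3 x * Im2 I" "Im3 x * Im1 I = Im1 x * Im3 I"
    "Im1 x * Im2 I = Im2 x * Im1 I"
    using assms by (simp_all add: quat_eq_iff Re_I algebra_simps)
  \<comment> \<open>the vector part of \<open>x\<close> is parallel to the unit vector \<open>I\<close>\<close>
  with norm_I have "Im1 x = ?t * Im1 I" "Im2 x = ?t * Im2 I" "Im3 x = ?t * Im3 I"
    by algebra+
  then have "x = emb (Complex (QRe x) ?t)"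
    by (simp add: quat_eq_iff)
  then show ?thesis
    by blast
qed

lemma ex_anticommuting_unit: "\<exists>J. J * J = -1 \<and> I * J = - (J * I) \<and> qcnj J = - J"
proof (cases "Im1 I = 0 \<and> Im2 I = 0")
  case True
  define J where "J = Quat 0 1 0 0"
  have "J * J = -1" "I * J = - (J * I)" "qcnj J = - J"
    using True by (simp_all add: J_def quat_eq_iff Re_I)
  then show ?thesis
    by blast
next
  case False
  define n where "n = sqrt ((Im1 I)\<^sup>2 + (Im2 I)\<^sup>2)"
  have "(Im1 I)\<^sup>2 + (Im2 I)\<^sup>2 > 0"
    using False by (auto simp: sum_power2_gt_zero_iff)
  then have n_sq: "n * n = (Im1 I)\<^sup>2 + (Im2 I)\<^sup>2" and "n \<noteq> 0"
    by (auto simp: n_def)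
  \<comment> \<open>\<open>J\<close> is the unit vector \<open>(-I\<^sub>2, I\<^sub>1, 0) / n\<close>, orthogonal to \<open>I\<close>\<close>
  define J where "J = Quat 0 (- Im2 I / n) (Im1 I / n) 0"
  have "(Im2 I / n) * (Im2 I / n) + (Im1 I / n) * (Im1 I / n) = ((Im1 I)\<^sup>2 + (Im2 I)\<^sup>2) / (n * n)"
    by (simp add: add_divide_distrib power2_eq_square)
  also have "\<dots> = 1"
    using \<open>n \<noteq> 0\<close> by (simp add: n_sq[symmetric])
  finally have "(Im2 I / n) * (Im2 I / n) + (Im1 I / n) * (Im1 I / n) = 1" .
  then have "J * J = -1"
    by (simp add: J_def quat_eq_iff)
  moreover have "I * J = - (J * I)" "qcnj J = - J"
    by (simp_all add: J_def quat_eq_iff Re_I algebra_simps)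
  ultimately show ?thesis
    by blast
qed

lemma emb_eq_qreal_iff: "emb z = qreal r \<longleftrightarrow> z = of_real r"
  using inj_emb emb_of_real by (metis injD)

lemma emb_sesq_form:
  "emb (sesq_form F A c c) = (\<Sum>i\<in>A. \<Sum>j\<in>A. qcnj (emb (c i)) * emb (c j) * emb (F i j))"
  "emb (sesq_form F A c c) = (\<Sum>i\<in>A. \<Sum>j\<in>A. qcnj (emb (c i)) * emb (F i j) * emb (c j))"
  by (simp_all add: sesq_form_def emb_sum mult_ac flip: emb_mult emb_cnj)

lemma cplx_pos_def_iff_sesq_form:
  assumes "\<And>x. \<phi> x = emb (f x)"
  shows "cplx_pos_def I op star \<phi> \<longleftrightarrow>
    (\<forall>(k::nat) s c. \<exists>r\<ge>0. sesq_form (\<lambda>i j. f (op (star (s i)) (s j))) {..<k} c c = of_real r)"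
proof -
  have slice_coeffs: "(\<forall>c. (\<forall>i. c i \<in> cslice I) \<longrightarrow> P c) \<longleftrightarrow> (\<forall>g. P (\<lambda>i. emb (g i)))"
    for P :: "(nat \<Rightarrow> quat) \<Rightarrow> bool"
  proof
    assume H: "\<forall>g. P (\<lambda>i. emb (g i))"
    show "\<forall>c. (\<forall>i. c i \<in> cslice I) \<longrightarrow> P c"
    proof (intro allI impI)
      fix c :: "nat \<Rightarrow> quat" assume "\<forall>i. c i \<in> cslice I"
      then have "\<forall>i. \<exists>z. c i = emb z"
        by (auto simp: cslice_eq_range)
      then obtain g where "\<And>i. c i = emb (g i)"
        by metis
      with H show "P c"
        by (metis ext)
    qed
  qed (auto simp: cslice_eq_range)
  have "cplx_pos_def I op star \<phi> \<longleftrightarrow> (\<forall>(k::nat) s g. \<exists>r\<ge>0.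
      (\<Sum>i<k. \<Sum>j<k. qcnj (emb (g i)) * emb (g j) * emb (f (op (star (s i)) (s j)))) = qreal r)"
    unfolding cplx_pos_def_def assms by (simp only: slice_coeffs)
  then show ?thesis
    by (simp only: emb_sesq_form(1)[symmetric] emb_eq_qreal_iff)
qed

end

locale quat_frame = quat_slice +
  fixes J :: quat
  assumes J_mult_J: "J * J = -1" and I_J_anticommute: "I * J = - (J * I)" and qcnj_J: "qcnj J = - J"
begin

lemma J_mult_emb: "J * emb z = emb (cnj z) * J"
proof -
  have "J * emb z = qreal (Re z) * J + qreal (Im z) * (J * I)"
    by (simp add: slice_emb_def distrib_left qreal_mult_commute mult.assoc)
  also have "\<dots> = qreal (Re z) * J - qreal (Im z) * (I * J)"
    by (simp add: I_J_anticommute)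
  also have "\<dots> = emb (cnj z) * J"
    by (simp add: slice_emb_def algebra_simps quat_eq_iff)
  finally show ?thesis .
qed

lemma quat_split: "\<exists>a b. q = emb a + emb b * J"
proof -
  \<comment> \<open>\<open>q \<mp> I q I\<close> commutes resp. anticommutes with \<open>I\<close>; right multiplication by \<open>J\<close> swaps the two\<close>
  define q1 where "q1 = q - I * q * I"
  define q2 where "q2 = q + I * q * I"
  have "q1 * I = q * I + I * q" "I * q1 = I * q + q * I"
    by (simp_all add: q1_def left_diff_distrib right_diff_distrib mult.assoc I_mult_I I_mult_I_left)
  then have "q1 * I = I * q1"
    by (simp add: add.commute)
  then obtain z1 where z1: "q1 = emb z1"
    using commute_I_imp_in_range_emb by blast
  have "I * q2 = I * q - q * I" "q2 * I = q * I - I * q"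
    by (simp_all add: q2_def distrib_left distrib_right mult.assoc I_mult_I I_mult_I_left)
  then have "I * q2 = - (q2 * I)"
    by simp
  have "(- (q2 * J)) * I = q2 * (I * J)"
    by (simp add: I_J_anticommute mult.assoc)
  also have "\<dots> = I * (- (q2 * J))"
    by (simp add: \<open>I * q2 = - (q2 * I)\<close> flip: mult.assoc)
  finally have "(- (q2 * J)) * I = I * (- (q2 * J))" .
  then obtain z2 where "- (q2 * J) = emb z2"
    using commute_I_imp_in_range_emb by blast
  have "q2 = - (q2 * J) * J"
    by (simp add: mult.assoc J_mult_J)
  with \<open>- (q2 * J) = emb z2\<close> have z2: "q2 = emb z2 * J"
    by simp
  have "q1 + q2 = q + q"
    by (simp add: q1_def q2_def)
  then have "q = qreal (1/2) * (q1 + q2)"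
    by (simp add: quat_eq_iff)
  also have "\<dots> = emb (z1 / 2) + emb (z2 / 2) * J"
    by (simp add: z1 z2 quat_eq_iff algebra_simps)
  finally show ?thesis
    by blast
qed

lemma qcnj_split_mult_emb_mult_split:
  "qcnj (emb a1 + emb b1 * J) * emb f * (emb a2 + emb b2 * J) =
   emb (cnj a1 * f * a2 + b1 * cnj f * cnj b2) + emb (cnj a1 * f * b2 - b1 * cnj f * cnj a2) * J"
proof -
  have qcnj_q: "qcnj (emb a1 + emb b1 * J) = emb (cnj a1) - emb b1 * J"
    by (simp add: qcnj_add qcnj_mult qcnj_J J_mult_emb flip: emb_cnj)
  have "qcnj (emb a1 + emb b1 * J) * emb f * (emb a2 + emb b2 * J) =
      emb (cnj a1) * emb f * emb a2 + emb (cnj a1) * emb f * emb b2 * J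
      - emb b1 * (J * emb f * emb a2) - emb b1 * (J * emb f * emb b2 * J)"
    unfolding qcnj_q by (simp add: algebra_simps)
  also have "\<dots> = emb (cnj a1 * f * a2) + emb (cnj a1 * f * b2) * J
      - emb (b1 * cnj f * cnj a2) * J + emb (b1 * cnj f * cnj b2)"
    by (simp add: J_mult_emb emb_mult mult.assoc J_mult_J flip: emb_cnj)
  finally show ?thesis
    by (simp add: emb_add emb_diff algebra_simps)
qed

lemma quat_form_split:
  assumes "\<And>i. q i = emb (a i) + emb (b i) * J"
  shows "(\<Sum>i\<in>A. \<Sum>j\<in>A. qcnj (q i) * emb (F i j) * q j) =
    emb (sesq_form F A a a + cnj (sesq_form F A b b)) + emb (sesq_form F A a b - cnj (sesq_form F A b a)) * J"
proof -
  have "(\<Sum>i\<in>A. \<Sum>j\<in>A. qcnj (q i) * emb (F i j) * q j) =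
      emb (\<Sum>i\<in>A. \<Sum>j\<in>A. cnj (a i) * F i j * a j + b i * cnj (F i j) * cnj (b j))
      + emb (\<Sum>i\<in>A. \<Sum>j\<in>A. cnj (a i) * F i j * b j - b i * cnj (F i j) * cnj (a j)) * J"
    by (simp add: assms qcnj_split_mult_emb_mult_split emb_sum emb_add emb_diff sum.distrib sum_distrib_right)
  then show ?thesis
    by (simp add: sesq_form_def sum.distrib sum_subtractf algebra_simps)
qed

lemma quat_form_nonneg:
  assumes "\<And>c. \<exists>r\<ge>0. sesq_form F A c c = of_real r"
  shows "\<exists>r\<ge>0. (\<Sum>i\<in>A. \<Sum>j\<in>A. qcnj (q i) * emb (F i j) * q j) = qreal r"
proof -
  from quat_split have "\<forall>i. \<exists>a b. q i = emb a + emb b * J"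
    by blast
  then obtain a b where ab: "\<And>i. q i = emb (a i) + emb (b i) * J"
    by metis
  obtain r1 r2 where "r1 \<ge> 0" "sesq_form F A a a = of_real r1"
    and "r2 \<ge> 0" "sesq_form F A b b = of_real r2"
    using assms by metis
  moreover have "sesq_form F A a b = cnj (sesq_form F A b a)"
    using assms by (intro sesq_form_hermitian) (metis Reals_of_real)
  ultimately have "(\<Sum>i\<in>A. \<Sum>j\<in>A. qcnj (q i) * emb (F i j) * q j) = qreal (r1 + r2)"
    by (simp add: quat_form_split[OF ab] emb_of_real emb_0 flip: of_real_add)
  with \<open>r1 \<ge> 0\<close> \<open>r2 \<ge> 0\<close> show ?thesis
    by (metis add_nonneg_nonneg)
qed

end

theorem mainTheorem6:
  fixes op :: "'a \<Rightarrow> 'a \<Rightarrow> 'a" and e :: 'a and star :: "'a \<Rightarrow> 'a"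
    and I :: quat and \<phi> :: "'a \<Rightarrow> quat"
  assumes "semigroup_involution op e star"
    and "imag_unit I"
    and "\<forall>s. \<phi> s \<in> cslice I"
  shows "cplx_pos_def I op star \<phi> \<longleftrightarrow> quat_pos_def op star \<phi>"
proof -
  interpret quat_slice I
    by unfold_locales fact
  obtain J where "J * J = -1" "I * J = - (J * I)" "qcnj J = - J"
    using ex_anticommuting_unit by blast
  then interpret quat_frame I J
    by unfold_locales
  from assms(3) have "\<forall>x. \<exists>z. \<phi> x = emb z"
    by (auto simp: cslice_eq_range)
  then obtain f where f: "\<And>x. \<phi> x = emb (f x)"
    by metis
  let ?F = "\<lambda>s i j. f (op (star (s i)) (s j))"
  have "cplx_pos_def I op star \<phi> \<longleftrightarrow> (\<forall>(k::nat) s c. \<exists>r\<ge>0. sesq_form (?F s) {..<k} c c = of_real r)"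
    by (rule cplx_pos_def_iff_sesq_form) (fact f)
  also have "\<dots> \<longleftrightarrow> quat_pos_def op star \<phi>"
  proof
    assume "\<forall>(k::nat) s c. \<exists>r\<ge>0. sesq_form (?F s) {..<k} c c = of_real r"
    then show "quat_pos_def op star \<phi>"
      unfolding quat_pos_def_def f by (intro allI quat_form_nonneg) blast
  next
    assume Q: "quat_pos_def op star \<phi>"
    have "\<exists>r\<ge>0. emb (sesq_form (?F s) {..<k} c c) = qreal r" for k :: nat and s c
      using Q[unfolded quat_pos_def_def, rule_format, where k = k and s = s and q = "\<lambda>i. emb (c i)"]
      by (simp add: f emb_sesq_form(2))
    then show "\<forall>(k::nat) s c. \<exists>r\<ge>0. sesq_form (?F s) {..<k} c c = of_real r"
      by (simp add: emb_eq_qreal_iff)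
  qed
  finally show ?thesis .
qed

end
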